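(* Let $n=2$ or $n=3$, let $f\in C^3(\mathbb{R}^n)$, $g\in C^2(\mathbb{R}^n)$, and suppose there exist $R>0$, $C_0>0$, $\kappa>0$ with $f(x)>0$ and $\frac{f(x)}{1+|x|}-|\nabla f(x)|+g(x)\ge\frac{C_0}{(1+|x|)^{1+\kappa}}$ for $|x|\ge R$. Let $u^0$ solve $u^0_{tt}-\Delta u^0=0$ in $\mathbb{R}^n\times[0,\infty)$, $u^0(x,0)=f(x)$, $u^0_t(x,0)=g(x)$. Then for all $(x,t)\in\Sigma_2:=\{(x,t)\in\mathbb{R}^n\times(0,\infty): |x|-t\ge\max\{R,t-1\}\}$: if $n=3$, $$u^0(x,t)\ge\frac{t}{4\pi}\int_{|\omega|=1}\Big\{\frac{f(x+t\omega)}{1+|x+t\omega|}-|\nabla f(x+t\omega)|+g(x+t\omega)\Big\}dS_\omega;$$ if $n=2$, $$u^0(x,t)\ge\frac{1}{2\pi}\int_0^t\frac{\rho\,d\rho}{\sqrt{t^2-\rho^2}}\int_{|\omega|=1}\Big\{\frac{f(x+\rho\omega)}{1+|x+\rho\omega|}-|\nabla f(x+\rho\omega)|+g(x+\rho\omega)\Big\}dS_\omega.$$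
   Context: $dS_\omega$ denotes surface measure on the unit sphere (unit circle when $n=2$). *)

theory Defs
  imports "HOL-Analysis.Analysis"
begin

definition pdiff :: "'a::euclidean_space set \<Rightarrow> ('a \<Rightarrow> real) \<Rightarrow> 'a \<Rightarrow> 'a \<Rightarrow> real" where
  "pdiff S h v p = frechet_derivative h (at p within S) v"

fun cont_diff :: "nat \<Rightarrow> ('a::euclidean_space \<Rightarrow> real) \<Rightarrow> 'a set \<Rightarrow> bool" where
  "cont_diff 0 h S = continuous_on S h"
| "cont_diff (Suc k) h S =
     (continuous_on S h \<and> (\<forall>p\<in>S. h differentiable (at p within S)) \<and>
      (\<forall>i\<in>Basis. cont_diff k (pdiff S h i) S))"

definition grad :: "('a::euclidean_space \<Rightarrow> real) \<Rightarrow> 'a \<Rightarrow> 'a" where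
  "grad f x = (\<Sum>i\<in>Basis. frechet_derivative f (at x) i *\<^sub>R i)"

definition wave_sol :: "('n::euclidean_space \<times> real \<Rightarrow> real) \<Rightarrow> ('n \<Rightarrow> real) \<Rightarrow> ('n \<Rightarrow> real) \<Rightarrow> bool" where
  "wave_sol u f g \<longleftrightarrow>
     cont_diff 2 u (UNIV \<times> {0..}) \<and>
     (\<forall>p\<in>UNIV \<times> {0..}.
        pdiff (UNIV \<times> {0..}) (pdiff (UNIV \<times> {0..}) u (0, 1)) (0, 1) p =
        (\<Sum>i\<in>Basis. pdiff (UNIV \<times> {0..}) (pdiff (UNIV \<times> {0..}) u (i, 0)) (i, 0) p)) \<and>
     (\<forall>x. u (x, 0) = f x \<and> pdiff (UNIV \<times> {0..}) u (0, 1) (x, 0) = g x)"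

definition sphere_int2 :: "(real^2 \<Rightarrow> real) \<Rightarrow> real" where
  "sphere_int2 h = integral {0..2*pi} (\<lambda>\<phi>. h (vector [cos \<phi>, sin \<phi>]))"

text \<open>Integral over the unit sphere in R^3 w.r.t. surface measure (spherical coordinates).\<close>
definition sphere_int3 :: "(real^3 \<Rightarrow> real) \<Rightarrow> real" where
  "sphere_int3 h = integral {0..pi} (\<lambda>\<theta>. integral {0..2*pi}
      (\<lambda>\<phi>. h (vector [sin \<theta> * cos \<phi>, sin \<theta> * sin \<phi>, cos \<theta>]) * sin \<theta>))"

end

theory Submission
  imports Defs
begin

text \<open>For \<open>n = 3\<close> we prove Kirchhoff's formula directly: along the backward light cone
  \<open>s \<mapsto> (x + s\<omega>, T - s)\<close> the kernel \<open>s u\<^sub>t + u + s \<nabla>u\<cdot>\<omega>\<close> has an \<open>s\<close>-derivative which, by the wave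
  equation and the symmetry of mixed derivatives, is a divergence on the unit sphere; hence its
  sphere integral is the same at \<open>s = 0\<close> (where it is \<open>4\<pi> u(x,T)\<close>) and at \<open>s = T\<close> (where it involves
  only the data). On the cone of a point of \<open>\<Sigma>\<^sub>2\<close> every \<open>y = x + t\<omega>\<close> satisfies \<open>|y| \<ge> R\<close> and
  \<open>t \<le> 1 + |y|\<close>, so \<open>t f(y)/(1+|y|) \<le> f(y)\<close> and \<open>t \<nabla>f\<cdot>\<omega> \<ge> -t|\<nabla>f|\<close>, which bounds the data term from
  below. For \<open>n = 2\<close> the solution, extended to \<open>\<real>\<^sup>3\<close> independently of \<open>x\<^sub>3\<close>, is a solution in \<open>\<real>\<^sup>3\<close>
  (Hadamard's descent), and the substitution \<open>\<rho> = t sin \<theta>\<close> turns the sphere integral of a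
  function of \<open>(x\<^sub>1, x\<^sub>2)\<close> into the weighted integral of circle means.\<close>

section \<open>Calculus in the plane\<close>

lemma integral_eq_diff_antiderivative:
  fixes f f' :: "real \<Rightarrow> real"
  assumes "a \<le> b" "\<And>x. x \<in> {a..b} \<Longrightarrow> (f has_real_derivative f' x) (at x)"
  shows "integral {a..b} f' = f b - f a"
proof -
  have "(f' has_integral (f b - f a)) {a..b}"
    using assms by (intro fundamental_theorem_of_calculus)
      (simp_all add: has_real_derivative_iff_has_vector_derivative has_vector_derivative_at_within)
  then show ?thesis by (rule integral_unique)
qed

lemma eq_0_if_integrals_over_squares_eq_0:
  fixes D :: "real \<times> real \<Rightarrow> real"
  assumes "open G" "(x0,y0) \<in> G" "continuous_on G D"
    and zero: "\<And>h. h > 0 \<Longrightarrow> cbox (x0,y0) (x0+h,y0+h) \<subseteq> G \<Longrightarrow> integral (cbox (x0,y0) (x0+h,y0+h)) D = 0"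
  shows "D (x0,y0) = 0"
proof (rule ccontr)
  define d where "d = D (x0,y0)"
  assume "D (x0,y0) \<noteq> 0"
  then have d0: "\<bar>d\<bar> > 0" by (simp add: d_def)
  obtain e where e: "e > 0" "ball (x0,y0) e \<subseteq> G"
    using assms(1,2) openE by blast
  have "continuous (at (x0,y0)) D"
    using assms by (simp add: continuous_on_eq_continuous_at)
  then obtain e2 where e2: "e2 > 0" "\<And>z. dist z (x0,y0) < e2 \<Longrightarrow> dist (D z) (D (x0,y0)) < \<bar>d\<bar>/2"
    unfolding continuous_at_eps_delta using d0 by (metis half_gt_zero)
  define h where "h = min e e2 / 2"
  have h0: "h > 0" using e e2 by (simp add: h_def)
  define B where "B = cbox (x0,y0) (x0+h,y0+h)"
  have Bsub: "B \<subseteq> ball (x0,y0) (min e e2)"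
  proof
    fix z assume "z \<in> B"
    then obtain x y where z: "z = (x,y)" "x0 \<le> x" "x \<le> x0+h" "y0 \<le> y" "y \<le> y0+h"
      by (cases z) (auto simp: B_def cbox_Pair_eq)
    have "dist (x0,y0) z = sqrt ((x0-x)^2 + (y0-y)^2)"
      by (simp add: z dist_Pair_Pair dist_real_def power2_commute)
    also have "\<dots> \<le> sqrt (h^2 + h^2)"
      using z by (intro real_sqrt_le_mono add_mono)
        (simp_all add: power2_commute[of x0] power2_commute[of y0] power_mono)
    also have "\<dots> < 2*h" using h0
      by (intro real_less_lsqrt) (auto simp: power2_eq_square)
    finally show "z \<in> ball (x0,y0) (min e e2)" by (simp add: h_def)
  qed
  then have BG: "B \<subseteq> G" using e(2) by (meson order.trans subset_ball min.cobounded1)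
  have near: "\<bar>D z - d\<bar> < \<bar>d\<bar>/2" if "z \<in> B" for z
    using e2(2)[of z] that Bsub by (auto simp: dist_commute dist_real_def d_def)
  have int0: "integral B D = 0" using zero[OF h0] BG by (simp add: B_def)
  have intD: "D integrable_on B"
    unfolding B_def by (rule integrable_continuous) (use assms(3) BG continuous_on_subset B_def in blast)
  have cont: "Henstock_Kurzweil_Integration.content B = h*h" using h0 by (simp add: B_def content_Pair)
  show False
  proof (cases "d > 0")
    case True
    have "d/2 \<le> D z" if "z \<in> B" for z using near[OF that] True by linarith
    then have "integral B (\<lambda>z. d/2) \<le> integral B D"
      by (intro integral_le intD) (auto simp: B_def)
    then have "h * h * d \<le> 0" using int0 cont by (simp add: B_def)
    then show False using h0 True by (simp add: mult_le_0_iff)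
  next
    case False
    with d0 have "d < 0" by simp
    have "D z \<le> d/2" if "z \<in> B" for z using near[OF that] \<open>d < 0\<close> by linarith
    then have "integral B D \<le> integral B (\<lambda>z. d/2)"
      by (intro integral_le intD) (auto simp: B_def)
    then have "0 \<le> h * h * d" using int0 cont by (simp add: B_def)
    then show False using h0 \<open>d < 0\<close> by (simp add: zero_le_mult_iff mult_le_0_iff)
  qed
qed

lemma iterated_integral_mixed_partial:
  fixes a ax axy :: "real \<Rightarrow> real \<Rightarrow> real"
  assumes "x0 \<le> x1" "y0 \<le> y1"
    and "\<And>x y. x \<in> {x0..x1} \<Longrightarrow> y \<in> {y0..y1} \<Longrightarrow> ((\<lambda>x. a x y) has_real_derivative ax x y) (at x)"
    and "\<And>x y. x \<in> {x0..x1} \<Longrightarrow> y \<in> {y0..y1} \<Longrightarrow> ((\<lambda>y. ax x y) has_real_derivative axy x y) (at y)"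
  shows "integral {x0..x1} (\<lambda>x. integral {y0..y1} (\<lambda>y. axy x y)) = a x1 y1 - a x1 y0 - (a x0 y1 - a x0 y0)"
proof -
  have "integral {x0..x1} (\<lambda>x. integral {y0..y1} (\<lambda>y. axy x y)) = integral {x0..x1} (\<lambda>x. ax x y1 - ax x y0)"
    using assms(2,4) by (intro integral_cong integral_eq_diff_antiderivative) auto
  also have "\<dots> = (a x1 y1 - a x1 y0) - (a x0 y1 - a x0 y0)"
    using assms(1-3) by (intro integral_eq_diff_antiderivative) (auto intro!: derivative_eq_intros)
  finally show ?thesis .
qed

text \<open>Clairaut's theorem: both mixed derivatives integrate over a small square to the same
  second difference of \<open>a\<close>.\<close>

lemma mixed_partials_eq:
  fixes a ax ay axy ayx :: "real \<Rightarrow> real \<Rightarrow> real"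
  assumes G: "open G" "(x0,y0) \<in> G"
    and dx: "\<And>x y. (x,y) \<in> G \<Longrightarrow> ((\<lambda>x. a x y) has_real_derivative ax x y) (at x)"
    and dy: "\<And>x y. (x,y) \<in> G \<Longrightarrow> ((\<lambda>y. a x y) has_real_derivative ay x y) (at y)"
    and dxy: "\<And>x y. (x,y) \<in> G \<Longrightarrow> ((\<lambda>y. ax x y) has_real_derivative axy x y) (at y)"
    and dyx: "\<And>x y. (x,y) \<in> G \<Longrightarrow> ((\<lambda>x. ay x y) has_real_derivative ayx x y) (at x)"
    and c1: "continuous_on G (\<lambda>(x,y). axy x y)"
    and c2: "continuous_on G (\<lambda>(x,y). ayx x y)"
  shows "axy x0 y0 = ayx x0 y0"
proof -
  have "(\<lambda>(x,y). axy x y - ayx x y) (x0,y0) = 0"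
  proof (rule eq_0_if_integrals_over_squares_eq_0[OF G])
    show "continuous_on G (\<lambda>(x,y). axy x y - ayx x y)"
      using continuous_on_diff[OF c1 c2] by (simp add: case_prod_beta')
    fix h :: real assume h: "h > 0" and B: "cbox (x0,y0) (x0+h,y0+h) \<subseteq> G"
    then have inG: "(x,y) \<in> G" if "x \<in> {x0..x0+h}" "y \<in> {y0..y0+h}" for x y
      using that by (auto simp: cbox_Pair_eq)
    have cxy: "continuous_on (cbox (x0,y0) (x0+h,y0+h)) (\<lambda>(x,y). axy x y)"
      and cyx: "continuous_on (cbox (x0,y0) (x0+h,y0+h)) (\<lambda>(x,y). ayx x y)"
      using c1 c2 B continuous_on_subset by blast+
    have "integral (cbox (x0,y0) (x0+h,y0+h)) (\<lambda>(x,y). axy x y)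
        = integral {x0..x0+h} (\<lambda>x. integral {y0..y0+h} (\<lambda>y. axy x y))"
      using integral_prod_continuous[OF cxy] by (simp add: cbox_interval)
    also have "\<dots> = a (x0+h) (y0+h) - a (x0+h) y0 - (a x0 (y0+h) - a x0 y0)"
      using h inG by (intro iterated_integral_mixed_partial) (auto intro: dx dxy)
    also have "\<dots> = a (x0+h) (y0+h) - a x0 (y0+h) - (a (x0+h) y0 - a x0 y0)" by simp
    also have "\<dots> = integral {y0..y0+h} (\<lambda>y. integral {x0..x0+h} (\<lambda>x. ayx x y))"
      using h inG
      by (intro iterated_integral_mixed_partial[where a = "\<lambda>y x. a x y", symmetric]) (auto intro: dy dyx)
    also have "\<dots> = integral (cbox (x0,y0) (x0+h,y0+h)) (\<lambda>(x,y). ayx x y)"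
      using integral_prod_continuous[OF cyx] integral_swap_continuous[of x0 y0 "x0+h" "y0+h" ayx] cyx
      by (simp add: cbox_interval case_prod_beta')
    moreover have "integral (cbox (x0,y0) (x0+h,y0+h)) (\<lambda>(x,y). axy x y - ayx x y)
        = integral (cbox (x0,y0) (x0+h,y0+h)) (\<lambda>(x,y). axy x y) - integral (cbox (x0,y0) (x0+h,y0+h)) (\<lambda>(x,y). ayx x y)"
      using cxy cyx by (simp add: case_prod_beta' integral_diff integrable_continuous)
    ultimately show "integral (cbox (x0,y0) (x0+h,y0+h)) (\<lambda>(x,y). axy x y - ayx x y) = 0"
      by simp
  qed
  then show ?thesis by simp
qed

lemma double_integral_of_partial_derivatives_eq_0:
  fixes A B A' B' :: "real \<Rightarrow> real \<Rightarrow> real"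
  assumes "a \<le> b" "c \<le> d"
    and A': "\<And>t p. ((\<lambda>t. A t p) has_real_derivative A' t p) (at t)"
    and B': "\<And>t p. ((\<lambda>p. B t p) has_real_derivative B' t p) (at p)"
    and cA': "continuous_on UNIV (\<lambda>z. A' (fst z) (snd z))"
    and cB': "continuous_on UNIV (\<lambda>z. B' (fst z) (snd z))"
    and "\<And>p. A a p = A b p" "\<And>t. B t c = B t d"
  shows "integral {a..b} (\<lambda>t. integral {c..d} (\<lambda>p. A' t p + B' t p)) = 0"
proof -
  have cA'_p: "continuous_on X (\<lambda>p. A' t p)" and cB'_p: "continuous_on X (\<lambda>p. B' t p)" for t X
    by (auto intro!: continuous_on_compose2[OF cA', of _ "\<lambda>p. (t, p)", simplified]
      continuous_on_compose2[OF cB', of _ "\<lambda>p. (t, p)", simplified] continuous_intros)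
  have "integral {c..d} (\<lambda>p. A' t p + B' t p) = integral {c..d} (\<lambda>p. A' t p)" for t
  proof -
    have "integral {c..d} (\<lambda>p. B' t p) = B t d - B t c"
      using assms(2) B' by (intro integral_eq_diff_antiderivative)
    then show ?thesis
      using assms(8) by (simp add: integral_add integrable_continuous_real cA'_p cB'_p)
  qed
  then have "integral {a..b} (\<lambda>t. integral {c..d} (\<lambda>p. A' t p + B' t p))
      = integral {c..d} (\<lambda>p. integral {a..b} (\<lambda>t. A' t p))"
    using integral_swap_continuous[of a c b d A'] continuous_on_subset[OF cA']
    by (simp add: case_prod_beta')
  also have "\<dots> = integral {c..d} (\<lambda>p. A b p - A a p)"
    using assms(1) A' by (intro integral_cong integral_eq_diff_antiderivative)
  finally show ?thesis using assms(7) by simp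
qed

lemma has_vector_derivative_along_path:
  assumes "(R has_derivative (\<lambda>h. h *\<^sub>R (v, c))) (at t)"
    and "(F has_derivative (\<lambda>(h,\<tau>). L h + \<tau> *\<^sub>R w)) (at (R t))" and "linear L"
  shows "((\<lambda>s. F (R s)) has_vector_derivative (L v + c *\<^sub>R w)) (at t)"
proof -
  have "((\<lambda>s. F (R s)) has_derivative (\<lambda>h. (\<lambda>(h,\<tau>). L h + \<tau> *\<^sub>R w) (h *\<^sub>R (v, c)))) (at t)"
    by (rule has_derivative_compose[OF assms(1,2)])
  moreover have "(\<lambda>h. (\<lambda>(h,\<tau>). L h + \<tau> *\<^sub>R w) (h *\<^sub>R (v, c))) = (\<lambda>h. h *\<^sub>R (L v + c *\<^sub>R w))"
    using assms(3) by (auto simp: fun_eq_iff linear_scale scaleR_add_right)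
  ultimately show ?thesis by (simp add: has_vector_derivative_def)
qed

lemma has_real_derivative_along_path:
  assumes "(R has_derivative (\<lambda>h. h *\<^sub>R (v, c))) (at t)"
    and "(F has_derivative (\<lambda>(h,\<tau>). inner a h + \<tau> * b)) (at (R t))"
  shows "((\<lambda>s. F (R s)) has_real_derivative (inner a v + c * b)) (at t)"
proof -
  have "(F has_derivative (\<lambda>(h,\<tau>). inner a h + \<tau> *\<^sub>R b)) (at (R t))" using assms(2) by simp
  from has_vector_derivative_along_path[OF assms(1) this bounded_linear.linear[OF bounded_linear_inner_right]]
  show ?thesis by (simp add: has_real_derivative_iff_has_vector_derivative)
qed

section \<open>Integrals over the unit sphere\<close>

lemma vector3_eq_axis: "(vector [a,b,c] :: real^3) = a *\<^sub>R axis 1 1 + b *\<^sub>R axis 2 1 + c *\<^sub>R axis 3 1"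
  by (simp add: vec_eq_iff forall_3 axis_def)

lemma inner_vector3: "inner v (vector [a,b,c] :: real^3) = a * v$1 + b * v$2 + c * v$3"
  by (simp add: inner_vec_def sum_3 mult.commute)

lemma sum_Basis_vec3: "(\<Sum>b\<in>(Basis::(real^3) set). f b) = f (axis 1 1) + f (axis 2 1) + f (axis 3 1)"
proof -
  have B: "(Basis::(real^3) set) = {axis 1 1, axis 2 1, axis 3 1}"
    by (auto simp: Basis_vec_def UNIV_3)
  have "axis 1 1 \<noteq> (axis 2 1 :: real^3)" "axis 1 1 \<noteq> (axis 3 1 :: real^3)"
    "axis 2 1 \<noteq> (axis 3 1 :: real^3)"
    by (auto simp: axis_eq_axis)
  then show ?thesis unfolding B by (simp add: add.assoc)
qed

lemma inner_linear_vec3: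
  assumes "linear (M :: real^3 \<Rightarrow> real^3)"
  shows "inner (M v) w = (\<Sum>i\<in>UNIV. \<Sum>j\<in>UNIV. M (axis j 1) $ i * v$j * w$i)"
proof -
  have "v = v$1 *\<^sub>R axis 1 1 + v$2 *\<^sub>R axis 2 1 + v$3 *\<^sub>R axis 3 1"
    by (simp add: vec_eq_iff forall_3 axis_def)
  then have "M v = M (v$1 *\<^sub>R axis 1 1 + v$2 *\<^sub>R axis 2 1 + v$3 *\<^sub>R axis 3 1)" by simp
  also have "\<dots> = v$1 *\<^sub>R M (axis 1 1) + v$2 *\<^sub>R M (axis 2 1) + v$3 *\<^sub>R M (axis 3 1)"
    using assms by (simp add: linear_add linear_scale)
  finally have "M v = v$1 *\<^sub>R M (axis 1 1) + v$2 *\<^sub>R M (axis 2 1) + v$3 *\<^sub>R M (axis 3 1)" .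
  then show ?thesis by (simp add: inner_vec_def sum_3 algebra_simps)
qed

definition sph_er :: "real \<Rightarrow> real \<Rightarrow> real^3" where
  "sph_er \<theta> \<phi> = vector [sin \<theta> * cos \<phi>, sin \<theta> * sin \<phi>, cos \<theta>]"

definition sph_etheta :: "real \<Rightarrow> real \<Rightarrow> real^3" where
  "sph_etheta \<theta> \<phi> = vector [cos \<theta> * cos \<phi>, cos \<theta> * sin \<phi>, - sin \<theta>]"

definition sph_ephi :: "real \<Rightarrow> real^3" where
  "sph_ephi \<phi> = vector [- sin \<phi>, cos \<phi>, 0]"

lemma trace_in_spherical_frame:
  assumes "linear (M :: real^3 \<Rightarrow> real^3)"
  shows "inner (M (sph_er t p)) (sph_er t p) + inner (M (sph_etheta t p)) (sph_etheta t p)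
      + inner (M (sph_ephi p)) (sph_ephi p) = (\<Sum>b\<in>Basis. inner (M b) b)"
proof -
  have s1: "sin t ^ 2 + cos t ^ 2 = 1" "sin p ^ 2 + cos p ^ 2 = 1" by simp_all
  show ?thesis
    unfolding sum_Basis_vec3 inner_axis unfolding inner_linear_vec3[OF assms] sph_er_def sph_etheta_def sph_ephi_def
    by (simp add: sum_3) (use s1 in algebra)
qed

lemma norm_sph_er: "norm (sph_er t p) = 1"
proof -
  have s1: "sin t ^ 2 + cos t ^ 2 = 1" "sin p ^ 2 + cos p ^ 2 = 1" by simp_all
  have "inner (sph_er t p) (sph_er t p) = 1"
    unfolding sph_er_def inner_vector3 by simp (use s1 in algebra)
  then show ?thesis by (simp add: norm_eq_sqrt_inner)
qed

lemma has_derivative_sph_er_theta: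
  "((\<lambda>t. sph_er t p) has_derivative (\<lambda>h. h *\<^sub>R sph_etheta t p)) (at t)"
proof -
  have "((\<lambda>t. (sin t * cos p) *\<^sub>R axis 1 1 + (sin t * sin p) *\<^sub>R axis 2 1 + cos t *\<^sub>R (axis 3 1 :: real^3))
     has_derivative (\<lambda>h. (h * cos t * cos p) *\<^sub>R axis 1 1 + (h * cos t * sin p) *\<^sub>R axis 2 1
       + (h * (- sin t)) *\<^sub>R (axis 3 1 :: real^3))) (at t)"
    by (auto intro!: derivative_eq_intros simp: algebra_simps)
  moreover have "(\<lambda>h. (h * cos t * cos p) *\<^sub>R axis 1 1 + (h * cos t * sin p) *\<^sub>R axis 2 1
       + (h * (- sin t)) *\<^sub>R (axis 3 1 :: real^3)) = (\<lambda>h. h *\<^sub>R sph_etheta t p)"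
    by (auto simp: fun_eq_iff sph_etheta_def vector3_eq_axis algebra_simps)
  ultimately show ?thesis by (simp add: sph_er_def vector3_eq_axis)
qed

lemma has_derivative_sph_er_phi:
  "((\<lambda>p. sph_er t p) has_derivative (\<lambda>h. h *\<^sub>R (sin t *\<^sub>R sph_ephi p))) (at p)"
proof -
  have "((\<lambda>p. (sin t * cos p) *\<^sub>R axis 1 1 + (sin t * sin p) *\<^sub>R axis 2 1 + cos t *\<^sub>R (axis 3 1 :: real^3))
     has_derivative (\<lambda>h. (sin t * (- (h * sin p))) *\<^sub>R axis 1 1 + (sin t * (h * cos p)) *\<^sub>R axis 2 1
       + 0 *\<^sub>R (axis 3 1 :: real^3))) (at p)"
    by (auto intro!: derivative_eq_intros simp: algebra_simps)
  moreover have "(\<lambda>h. (sin t * (- (h * sin p))) *\<^sub>R axis 1 1 + (sin t * (h * cos p)) *\<^sub>R axis 2 1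
       + 0 *\<^sub>R (axis 3 1 :: real^3)) = (\<lambda>h. h *\<^sub>R (sin t *\<^sub>R sph_ephi p))"
    by (auto simp: fun_eq_iff sph_ephi_def vector3_eq_axis algebra_simps)
  ultimately show ?thesis by (simp add: sph_er_def vector3_eq_axis)
qed

lemma continuous_on_sph_er [continuous_intros]:
  fixes D :: "'a::t2_space set"
  shows "continuous_on D f \<Longrightarrow> continuous_on D g \<Longrightarrow> continuous_on D (\<lambda>z. sph_er (f z) (g z))"
  unfolding sph_er_def vector3_eq_axis by (auto intro!: continuous_intros)

lemma continuous_on_sph_etheta [continuous_intros]:
  fixes D :: "'a::t2_space set"
  shows "continuous_on D f \<Longrightarrow> continuous_on D g \<Longrightarrow> continuous_on D (\<lambda>z. sph_etheta (f z) (g z))"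
  unfolding sph_etheta_def vector3_eq_axis by (auto intro!: continuous_intros)

lemma continuous_on_sph_ephi [continuous_intros]:
  fixes D :: "'a::t2_space set"
  shows "continuous_on D g \<Longrightarrow> continuous_on D (\<lambda>z. sph_ephi (g z))"
  unfolding sph_ephi_def vector3_eq_axis by (auto intro!: continuous_intros)

lemma sphere_int3_eq_integral_cbox:
  assumes "continuous_on UNIV h"
  shows "sphere_int3 h = integral (cbox (0,0) (pi,2*pi)) (\<lambda>z. h (sph_er (fst z) (snd z)) * sin (fst z))"
proof -
  have "continuous_on (cbox (0,0) (pi,2*pi)) (\<lambda>z. h (sph_er (fst z) (snd z)) * sin (fst z))"
    by (intro continuous_intros continuous_on_compose2[OF assms]) auto
  from integral_prod_continuous[OF this] show ?thesis
    by (simp add: sphere_int3_def sph_er_def cbox_interval)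
qed

lemma sphere_int3_const: "sphere_int3 (\<lambda>w. c) = 4 * pi * c"
proof -
  have "integral {0..pi} sin = (- cos pi) - (- cos 0)"
    by (rule integral_eq_diff_antiderivative) (auto intro!: derivative_eq_intros)
  then show ?thesis unfolding sphere_int3_def by simp
qed

lemma sphere_int3_cmult: "sphere_int3 (\<lambda>w. c * h w) = c * sphere_int3 h"
  unfolding sphere_int3_def by (simp add: mult.assoc)

lemma sphere_int3_mono:
  assumes "continuous_on UNIV h1" "continuous_on UNIV h2" "\<And>w. norm w = 1 \<Longrightarrow> h1 w \<le> h2 w"
  shows "sphere_int3 h1 \<le> sphere_int3 h2"
proof -
  have integrable: "(\<lambda>z. h (sph_er (fst z) (snd z)) * sin (fst z)) integrable_on cbox (0,0) (pi,2*pi)"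
    if "continuous_on UNIV h" for h
    by (intro integrable_continuous continuous_intros continuous_on_compose2[OF that]) auto
  have "sin (fst z) \<ge> 0" if "z \<in> cbox (0,0) (pi,2*pi)" for z :: "real \<times> real"
    using that by (cases z) (auto simp: cbox_Pair_eq intro!: sin_ge_zero)
  then show ?thesis
    unfolding sphere_int3_eq_integral_cbox[OF assms(1)] sphere_int3_eq_integral_cbox[OF assms(2)]
    by (intro integral_le integrable assms) (simp add: mult_right_mono assms(3) norm_sph_er)
qed

lemma sphere_int3_eq_if_derivative_integral_0:
  fixes k k' :: "real \<Rightarrow> real^3 \<Rightarrow> real"
  assumes "T \<ge> 0"
    and k: "\<And>w. continuous_on {0..T} (\<lambda>s. k s w)"
    and k': "\<And>s w. s \<in> {0<..<T} \<Longrightarrow> ((\<lambda>s. k s w) has_real_derivative k' s w) (at s)"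
    and ck': "continuous_on ({0..T} \<times> UNIV) (\<lambda>(s,w). k' s w)"
    and ck0: "continuous_on UNIV (k 0)" and ckT: "continuous_on UNIV (k T)"
    and zero: "\<And>s. s \<in> {0<..<T} \<Longrightarrow> sphere_int3 (k' s) = 0"
  shows "sphere_int3 (k T) = sphere_int3 (k 0)"
proof -
  define box :: "(real \<times> real) set" where "box = cbox (0,0) (pi,2*pi)"
  define F where "F = (\<lambda>s z. k' s (sph_er (fst z) (snd z)) * sin (fst z))"
  have "continuous_on (cbox ((0,0),0) ((pi,2*pi),T))
      (\<lambda>y. (\<lambda>(s,w). k' s w) (snd y, sph_er (fst (fst y)) (snd (fst y))))"
    by (rule continuous_on_compose2[OF ck']) (auto intro!: continuous_intros simp: cbox_Pair_eq)
  then have cF: "continuous_on (cbox ((0,0),0) ((pi,2*pi),T)) (\<lambda>(z,s). F s z)"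
    unfolding F_def case_prod_beta' by (auto intro!: continuous_intros)
  have ck's: "continuous_on UNIV (k' s)" if "s \<in> {0..T}" for s
    by (rule continuous_on_compose2[OF ck', of UNIV "\<lambda>w. (s, w)", simplified])
      (use that in \<open>auto intro!: continuous_intros\<close>)
  have integrable: "(\<lambda>z. h (sph_er (fst z) (snd z)) * sin (fst z)) integrable_on box"
    if "continuous_on UNIV h" for h
    unfolding box_def by (intro integrable_continuous continuous_intros continuous_on_compose2[OF that]) auto
  have "sphere_int3 (k T) - sphere_int3 (k 0)
      = integral box (\<lambda>z. (k T (sph_er (fst z) (snd z)) - k 0 (sph_er (fst z) (snd z))) * sin (fst z))"
    unfolding sphere_int3_eq_integral_cbox[OF ckT] sphere_int3_eq_integral_cbox[OF ck0] box_def[symmetric]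
    by (subst integral_diff[symmetric]) (use integrable ck0 ckT in \<open>simp_all add: left_diff_distrib\<close>)
  also have "\<dots> = integral box (\<lambda>z. integral {0..T} (\<lambda>s. F s z))"
  proof (rule integral_cong)
    fix z
    have "integral {0..T} (\<lambda>s. k' s w) = k T w - k 0 w" for w
      using assms(1) k k' by (intro integral_unique fundamental_theorem_of_calculus_interior)
        (auto simp: has_real_derivative_iff_has_vector_derivative)
    then show "(k T (sph_er (fst z) (snd z)) - k 0 (sph_er (fst z) (snd z))) * sin (fst z)
        = integral {0..T} (\<lambda>s. F s z)"
      by (simp add: F_def)
  qed
  also have "\<dots> = integral {0..T} (\<lambda>s. integral box (F s))"
    using integral_swap_continuous[of "(0,0)" 0 "(pi,2*pi)" T "\<lambda>z s. F s z"] cF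
    by (simp add: box_def cbox_interval)
  also have "\<dots> = integral {0<..<T} (\<lambda>s. integral box (F s))"
    by (rule integral_open_interval_real)
  also have "\<dots> = integral {0<..<T} (\<lambda>s. 0)"
    using zero ck's by (intro integral_cong) (simp add: sphere_int3_eq_integral_cbox F_def box_def)
  finally show ?thesis by simp
qed

lemma spherical_divergence_identity:
  fixes G :: "real^3" and H :: "real^3 \<Rightarrow> real^3"
  assumes "linear H"
  shows "(s * cos t * inner G (sph_etheta t p)
        + s * sin t * (s * inner (H (sph_etheta t p)) (sph_etheta t p) - inner G (sph_er t p)))
      + s * (s * sin t * inner (H (sph_ephi p)) (sph_ephi p) - inner G (vector [cos p, sin p, 0]))
    = - s * sin t * (2 * inner G (sph_er t p)
        + s * (inner (H (sph_er t p)) (sph_er t p) - (\<Sum>b\<in>Basis. inner (H b) b)))"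
    (is "?lhs = ?rhs")
proof -
  have s1: "sin t ^ 2 + cos t ^ 2 = 1" "sin p ^ 2 + cos p ^ 2 = 1" by simp_all
  have radial: "cos t * inner G (sph_etheta t p) - sin t * inner G (sph_er t p) - inner G (vector [cos p, sin p, 0])
      = - 2 * sin t * inner G (sph_er t p)"
    unfolding inner_vector3 sph_etheta_def sph_er_def by simp (use s1 in algebra)
  have "?lhs = s * (cos t * inner G (sph_etheta t p) - sin t * inner G (sph_er t p)
      - inner G (vector [cos p, sin p, 0])) + s * s * sin t * (inner (H (sph_etheta t p)) (sph_etheta t p)
      + inner (H (sph_ephi p)) (sph_ephi p))"
    by (simp add: algebra_simps)
  also have "\<dots> = ?rhs"
    unfolding radial trace_in_spherical_frame[OF assms, of t p, symmetric] by (simp add: algebra_simps)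
  finally show ?thesis .
qed

section \<open>The one-dimensional descent integral\<close>

lemma integrable_on_descent_weight:
  fixes S :: "real \<Rightarrow> real"
  assumes "continuous_on {0..t} S" "t > 0"
  shows "(\<lambda>\<rho>. \<rho> / sqrt (t\<^sup>2 - \<rho>\<^sup>2) * S \<rho>) integrable_on {0..t}"
proof -
  define q where "q = (\<lambda>\<rho>::real. \<rho> / sqrt (t\<^sup>2 - \<rho>\<^sup>2))"
  have "(q has_integral (- sqrt (t\<^sup>2 - t\<^sup>2) - (- sqrt (t\<^sup>2 - 0\<^sup>2)))) {0..t}"
  proof (rule fundamental_theorem_of_calculus_interior)
    show "continuous_on {0..t} (\<lambda>\<rho>. - sqrt (t\<^sup>2 - \<rho>\<^sup>2))" by (intro continuous_intros)
    fix \<rho> assume "\<rho> \<in> {0<..<t}"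
    then have "t\<^sup>2 - \<rho>\<^sup>2 > 0" by (simp add: power_strict_mono)
    then have "((\<lambda>\<rho>. - sqrt (t\<^sup>2 - \<rho>\<^sup>2)) has_real_derivative q \<rho>) (at \<rho>)"
      by (auto intro!: derivative_eq_intros simp: q_def field_simps)
    then show "((\<lambda>\<rho>. - sqrt (t\<^sup>2 - \<rho>\<^sup>2)) has_vector_derivative q \<rho>) (at \<rho>)"
      by (simp add: has_real_derivative_iff_has_vector_derivative)
  qed (use assms in simp)
  then have "q absolutely_integrable_on {0..t}"
    by (intro nonnegative_absolutely_integrable_1)
      (auto simp: q_def intro!: divide_nonneg_nonneg real_sqrt_ge_zero power_mono)
  then have "(\<lambda>\<rho>. S \<rho> * q \<rho>) absolutely_integrable_on {0..t}"
    using assms(1)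
    by (intro absolutely_integrable_bounded_measurable_product_real continuous_imp_measurable_on_sets_lebesgue
        compact_imp_bounded compact_continuous_image) auto
  then show ?thesis by (simp add: absolutely_integrable_on_def q_def mult.commute)
qed

lemma integral_0_pi_reflect:
  fixes h :: "real \<Rightarrow> real"
  assumes "continuous_on {0..pi} h" "\<And>x. h (pi - x) = h x"
  shows "integral {0..pi} h = 2 * integral {0..pi/2} h"
proof -
  have "((\<lambda>x. (-1) *\<^sub>R h (pi - x)) has_integral
      (integral {pi - 0..pi - pi/2} h - integral {pi - pi/2..pi - 0} h)) {0..pi/2}"
    by (rule has_integral_substitution_general[where s = "{}" and c = "pi/2" and d = pi])
      (auto intro!: derivative_eq_intros continuous_intros continuous_on_subset[OF assms(1)])
  then have "integral {pi/2..pi} h = integral {0..pi/2} h"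
    using assms(2) by (simp add: integral_unique has_integral_neg_iff)
  moreover have "h integrable_on {0..pi}"
    using assms(1) by (rule integrable_continuous_real)
  ultimately show ?thesis
    by (simp add: Henstock_Kurzweil_Integration.integral_combine[symmetric, of 0 "pi/2" pi])
qed

lemma integral_arcsin_substitution:
  fixes S :: "real \<Rightarrow> real"
  assumes "continuous_on {0..b} S" "0 \<le> b" "b < t"
  shows "t * integral {0..arcsin (b / t)} (\<lambda>\<theta>. sin \<theta> * S (t * sin \<theta>))
       = integral {0..b} (\<lambda>\<rho>. \<rho> / sqrt (t\<^sup>2 - \<rho>\<^sup>2) * S \<rho>)"
proof -
  define F where "F = (\<lambda>\<rho>. \<rho> / sqrt (t\<^sup>2 - \<rho>\<^sup>2) * S \<rho>)"
  define c where "c = arcsin (b / t)"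
  have t: "t > 0" and bt: "0 \<le> b / t" "b / t < 1" using assms by auto
  have c: "0 \<le> c" "c < pi/2" unfolding c_def using bt
    by (auto intro!: arcsin_nonneg arcsin_less_arcsin[where y=1, simplified])
  have sin_c: "t * sin c = b" unfolding c_def using bt t by simp
  have "((\<lambda>\<theta>. (t * cos \<theta>) *\<^sub>R F (t * sin \<theta>)) has_integral integral {t * sin 0..t * sin c} F) {0..c}"
  proof (rule has_integral_substitution_strong[where s = "{}" and c = 0 and d = b])
    show "(\<lambda>\<theta>. t * sin \<theta>) ` {0..c} \<subseteq> {0..b}"
    proof clarify
      fix \<theta> assume "\<theta> \<in> {0..c}"
      then have "sin \<theta> \<le> sin c" "sin \<theta> \<ge> 0" using c by (auto intro!: sin_monotone_2pi_le sin_ge_zero)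
      then show "t * sin \<theta> \<in> {0..b}" using sin_c assms by (auto intro: mult_left_mono)
    qed
    have "sqrt (t\<^sup>2 - \<rho>\<^sup>2) \<noteq> 0" if "\<rho> \<in> {0..b}" for \<rho>
      using that assms by (auto simp: power_strict_mono)
    then show "continuous_on {0..b} F"
      unfolding F_def by (intro continuous_intros assms(1)) auto
  qed (use c sin_c assms in \<open>auto intro!: derivative_eq_intros continuous_intros\<close>)
  then have "integral {0..c} (\<lambda>\<theta>. (t * cos \<theta>) * F (t * sin \<theta>)) = integral {0..b} F"
    using sin_c by (simp add: integral_unique)
  moreover have "integral {0..c} (\<lambda>\<theta>. (t * cos \<theta>) * F (t * sin \<theta>))
      = integral {0..c} (\<lambda>\<theta>. t * (sin \<theta> * S (t * sin \<theta>)))"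
  proof (rule integral_cong)
    fix \<theta> assume "\<theta> \<in> {0..c}"
    then have cos: "cos \<theta> > 0" using c by (intro cos_gt_zero_pi) auto
    have "sqrt (t\<^sup>2 - (t * sin \<theta>)\<^sup>2) = sqrt ((t * cos \<theta>)\<^sup>2)"
      by (simp add: power_mult_distrib cos_squared_eq algebra_simps)
    then have "sqrt (t\<^sup>2 - (t * sin \<theta>)\<^sup>2) = t * cos \<theta>" using cos assms by simp
    then show "t * cos \<theta> * F (t * sin \<theta>) = t * (sin \<theta> * S (t * sin \<theta>))"
      unfolding F_def using cos assms by (simp add: field_simps)
  qed
  ultimately show ?thesis by (simp add: F_def c_def)
qed

text \<open>The substitution \<open>\<rho> = t sin \<theta>\<close> is singular at \<open>\<rho> = t\<close>, so it is performed on \<open>[0, b]\<close>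
  with \<open>b < t\<close> and then \<open>b \<rightarrow> t\<close>.\<close>

lemma integral_sin_eq_descent_integral:
  fixes S :: "real \<Rightarrow> real"
  assumes "continuous_on {0..t} S" "t > 0"
  shows "integral {0..pi} (\<lambda>\<theta>. sin \<theta> * S (t * sin \<theta>))
       = 2 / t * integral {0..t} (\<lambda>\<rho>. \<rho> / sqrt (t\<^sup>2 - \<rho>\<^sup>2) * S \<rho>)"
proof -
  define h where "h = (\<lambda>\<theta>. sin \<theta> * S (t * sin \<theta>))"
  define F where "F = (\<lambda>\<rho>. \<rho> / sqrt (t\<^sup>2 - \<rho>\<^sup>2) * S \<rho>)"
  have t_sin: "t * sin \<theta> \<in> {0..t}" if "\<theta> \<in> {0..pi}" for \<theta>
    using that assms(2) sin_le_one[of \<theta>] by (auto intro!: sin_ge_zero mult_nonneg_nonneg)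
  have ch: "continuous_on {0..pi} h"
    unfolding h_def by (intro continuous_intros continuous_on_compose2[OF assms(1)]) (use t_sin in auto)
  have "integral {0..pi} h = 2 * integral {0..pi/2} h"
    by (rule integral_0_pi_reflect[OF ch]) (simp add: h_def)
  define A where "A = (\<lambda>b. t * integral {0..arcsin (b / t)} h)"
  define B where "B = (\<lambda>b. integral {0..b} F)"
  have cB: "continuous_on {0..t} B"
    unfolding B_def F_def by (intro indefinite_integral_continuous_1 integrable_on_descent_weight assms)
  have bt: "0 \<le> b / t" "b / t \<le> 1" if "b \<in> {0..t}" for b
    using that assms(2) by auto
  have arcsin: "arcsin (b / t) \<in> {0..pi/2}" if "b \<in> {0..t}" for b
  proof -
    have "-1 \<le> b / t" "b / t \<le> 1" "0 \<le> b / t" using bt[OF that] by auto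
    then show ?thesis using arcsin_ubound[of "b/t"] arcsin_nonneg[of "b/t"] by auto
  qed
  have "\<forall>b\<in>{0..t}. - 1 \<le> b / t \<and> b / t \<le> 1"
  proof
    fix b :: real assume "b \<in> {0..t}"
    with bt[OF this] show "- 1 \<le> b / t \<and> b / t \<le> 1" by linarith
  qed
  then have c_arcsin: "continuous_on {0..t} (\<lambda>b. arcsin (b / t))"
    using assms(2) by (intro continuous_on_arcsin continuous_intros) auto
  have c_int: "continuous_on {0..pi/2} (\<lambda>y. integral {0..y} h)"
    by (intro indefinite_integral_continuous_1 integrable_continuous_real continuous_on_subset[OF ch]) auto
  have cA: "continuous_on {0..t} A"
    unfolding A_def using arcsin
    by (intro continuous_on_mult continuous_on_const continuous_on_compose2[OF c_int c_arcsin]) auto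
  have "A b - B b = 0" if "b \<in> {0..<t}" for b
    using that continuous_on_subset[OF assms(1)]
    by (simp add: A_def B_def h_def F_def integral_arcsin_substitution)
  then have "A t - B t = 0"
    using continuous_constant_on_closure[of "{0..<t}" "\<lambda>b. A b - B b" 0 t] cA cB assms(2)
    by (simp add: continuous_on_diff)
  then show ?thesis using \<open>integral {0..pi} h = 2 * integral {0..pi/2} h\<close> assms(2)
    by (simp add: A_def B_def h_def F_def field_simps)
qed

section \<open>Classical solutions of the wave equation\<close>

abbreviation upper_half :: "('n::euclidean_space \<times> real) set" where
  "upper_half \<equiv> UNIV \<times> {0..}"

text \<open>The first and second derivatives of a classical solution, split into space and time
  parts: \<open>ux\<close> is the spatial gradient, \<open>uxx p\<close> the spatial Hessian as a linear map, \<open>uxt\<close> and \<open>utx\<close>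
  the two orders of mixed derivative.\<close>

locale wave_data =
  fixes u :: "('n::euclidean_space) \<times> real \<Rightarrow> real"
    and ux uxt utx :: "'n \<times> real \<Rightarrow> 'n"
    and ut utt :: "'n \<times> real \<Rightarrow> real"
    and uxx :: "'n \<times> real \<Rightarrow> 'n \<Rightarrow> 'n"
  assumes has_derivative_u: "\<And>p. p \<in> upper_half \<Longrightarrow>
      (u has_derivative (\<lambda>(h,\<tau>). inner (ux p) h + \<tau> * ut p)) (at p within upper_half)"
    and has_derivative_ux: "\<And>p. p \<in> upper_half \<Longrightarrow>
      (ux has_derivative (\<lambda>(h,\<tau>). uxx p h + \<tau> *\<^sub>R uxt p)) (at p within upper_half)"
    and has_derivative_ut: "\<And>p. p \<in> upper_half \<Longrightarrow>
      (ut has_derivative (\<lambda>(h,\<tau>). inner (utx p) h + \<tau> * utt p)) (at p within upper_half)"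
    and linear_uxx: "\<And>p. linear (uxx p)"
    and continuous_u: "continuous_on upper_half u"
    and continuous_ux: "continuous_on upper_half ux"
    and continuous_ut: "continuous_on upper_half ut"
    and continuous_uxt: "continuous_on upper_half uxt"
    and continuous_utx: "continuous_on upper_half utx"
    and continuous_utt: "continuous_on upper_half utt"
    and continuous_uxx: "\<And>v. continuous_on upper_half (\<lambda>p. uxx p v)"
    and wave_equation: "\<And>p. p \<in> upper_half \<Longrightarrow> utt p = (\<Sum>b\<in>Basis. inner (uxx p b) b)"

lemma linear_pair_eq:
  fixes L :: "'n::euclidean_space \<times> real \<Rightarrow> 'b::real_vector"
  assumes "linear L"
  shows "L (h,\<tau>) = (\<Sum>i\<in>Basis. inner h i *\<^sub>R L (i,0)) + \<tau> *\<^sub>R L (0,1)"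
proof -
  have "(h,\<tau>) = (\<Sum>i\<in>Basis. inner h i *\<^sub>R (i,0::real)) + \<tau> *\<^sub>R (0,1)"
    by (simp add: prod_eq_iff fst_sum snd_sum euclidean_representation)
  then have "L (h,\<tau>) = L ((\<Sum>i\<in>Basis. inner h i *\<^sub>R (i,0::real)) + \<tau> *\<^sub>R (0,1))"
    by (rule arg_cong)
  also have "\<dots> = (\<Sum>i\<in>Basis. inner h i *\<^sub>R L (i,0)) + \<tau> *\<^sub>R L (0,1)"
    by (simp only: linear_add[OF assms] linear_sum[OF assms] linear_scale[OF assms])
  finally show ?thesis .
qed

lemma has_derivative_gradient_form:
  fixes F :: "'n::euclidean_space \<times> real \<Rightarrow> real"
  assumes "(F has_derivative L) net"
  shows "(F has_derivative (\<lambda>(h,\<tau>). inner (\<Sum>i\<in>Basis. L (i,0) *\<^sub>R i) h + \<tau> * L (0,1))) net"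
proof -
  have L: "L = (\<lambda>(h,\<tau>). inner (\<Sum>i\<in>Basis. L (i,0) *\<^sub>R i) h + \<tau> * L (0,1))"
  proof (intro ext, clarify)
    fix h \<tau>
    show "L (h,\<tau>) = inner (\<Sum>i\<in>Basis. L (i,0) *\<^sub>R i) h + \<tau> * L (0,1)"
      using linear_pair_eq[OF has_derivative_linear[OF assms], of h \<tau>]
      by (simp add: inner_sum_left inner_sum_right inner_commute mult.commute)
  qed
  show ?thesis by (rule subst[OF L, of "\<lambda>L'. (F has_derivative L') net", OF assms])
qed

lemma Basis_prod_fst: "i \<in> Basis \<Longrightarrow> ((i,0) :: 'a::euclidean_space \<times> 'b::euclidean_space) \<in> Basis"
  and Basis_prod_snd: "((0,1) :: 'a::euclidean_space \<times> real) \<in> Basis"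
  by (simp_all add: Basis_prod_def)

lemma frechet_derivative_initial_trace:
  fixes u :: "'n::euclidean_space \<times> real \<Rightarrow> real"
  assumes "(u has_derivative D) (at (y,0) within upper_half)" "\<And>y. u (y,0) = f y"
  shows "frechet_derivative f (at y) = (\<lambda>h. D (h,0))"
proof -
  have "((\<lambda>y. u (y,0)) has_derivative (\<lambda>h. D (h,0))) (at y)"
    by (rule has_derivative_in_compose[where f = "\<lambda>y. (y,0)" and s = UNIV, simplified])
      (auto intro!: derivative_eq_intros has_derivative_subset[OF assms(1)])
  then show ?thesis using assms(2) by (intro frechet_derivative_at[symmetric]) simp
qed

lemma wave_sol_imp_wave_data:
  fixes u :: "('n::euclidean_space) \<times> real \<Rightarrow> real"
  assumes "wave_sol u f g"
  shows "\<exists>ux uxt utx ut utt uxx. wave_data u ux uxt utx ut utt uxx \<and>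
     (\<forall>y. u (y,0) = f y \<and> ut (y,0) = g y \<and> ux (y,0) = grad f y)"
proof -
  let ?H = "upper_half :: ('n \<times> real) set"
  have C2: "cont_diff 2 u ?H"
    and wave: "\<And>p. p \<in> ?H \<Longrightarrow> pdiff ?H (pdiff ?H u (0, 1)) (0, 1) p
        = (\<Sum>i\<in>Basis. pdiff ?H (pdiff ?H u (i, 0)) (i, 0) p)"
    and initial: "\<And>x. u (x, 0) = f x" "\<And>x. pdiff ?H u (0, 1) (x, 0) = g x"
    using assms unfolding wave_sol_def by auto
  have cu: "continuous_on ?H u" and du: "\<And>p. p \<in> ?H \<Longrightarrow> u differentiable (at p within ?H)"
    and c1: "\<And>b. b \<in> Basis \<Longrightarrow> continuous_on ?H (pdiff ?H u b)"
    and d1: "\<And>b p. b \<in> Basis \<Longrightarrow> p \<in> ?H \<Longrightarrow> pdiff ?H u b differentiable (at p within ?H)"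
    and c2: "\<And>b c. b \<in> Basis \<Longrightarrow> c \<in> Basis \<Longrightarrow> continuous_on ?H (pdiff ?H (pdiff ?H u b) c)"
    using C2 by (auto simp: numeral_2_eq_2)
  define Du where "Du = (\<lambda>p. frechet_derivative u (at p within ?H))"
  define D where "D = (\<lambda>b p. frechet_derivative (pdiff ?H u b) (at p within ?H))"
  have pd1: "pdiff ?H u b p = Du p b" for b p by (simp add: pdiff_def Du_def)
  have pd2: "pdiff ?H (pdiff ?H u b) c p = D b p c" for b c p by (simp add: pdiff_def D_def)
  have hDu: "(u has_derivative Du p) (at p within ?H)" if "p \<in> ?H" for p
    using du[OF that] by (simp add: Du_def frechet_derivative_works)
  have hD: "(pdiff ?H u b has_derivative D b p) (at p within ?H)" if "b \<in> Basis" "p \<in> ?H" for b p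
    using d1[OF that] by (simp add: D_def frechet_derivative_works)
  have lD: "linear (D b p)" if "b \<in> Basis" "p \<in> ?H" for b p
    using hD[OF that] by (rule has_derivative_linear)
  define ux :: "'n \<times> real \<Rightarrow> 'n" where "ux = (\<lambda>p. \<Sum>i\<in>Basis. pdiff ?H u (i,0) p *\<^sub>R i)"
  define ut where "ut = pdiff ?H u (0,1)"
  define uxx :: "'n \<times> real \<Rightarrow> 'n \<Rightarrow> 'n" where "uxx = (\<lambda>p h. \<Sum>i\<in>Basis. (\<Sum>j\<in>Basis. inner h j * D (i,0) p (j,0)) *\<^sub>R i)"
  define uxt :: "'n \<times> real \<Rightarrow> 'n" where "uxt = (\<lambda>p. \<Sum>i\<in>Basis. D (i,0) p (0,1) *\<^sub>R i)"
  define utx :: "'n \<times> real \<Rightarrow> 'n" where "utx = (\<lambda>p. \<Sum>i\<in>Basis. D (0,1) p (i,0) *\<^sub>R i)"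
  define utt where "utt = (\<lambda>p. D (0,1) p (0,1))"
  have uxx_eq: "uxx p h = (\<Sum>i\<in>Basis. D (i,0) p (h,0) *\<^sub>R i)" if p: "p \<in> ?H" for p h
  proof -
    have "D (i,0) p (h,0) = (\<Sum>j\<in>Basis. inner h j * D (i,0) p (j,0))" if "i \<in> Basis" for i
      using linear_pair_eq[OF lD[OF Basis_prod_fst[OF that] p], of h 0] by simp
    then show ?thesis by (simp add: uxx_def cong: sum.cong)
  qed
  have "wave_data u ux uxt utx ut utt uxx"
  proof (rule wave_data.intro)
    fix p :: "'n \<times> real" assume p: "p \<in> ?H"
    show "(u has_derivative (\<lambda>(h,\<tau>). inner (ux p) h + \<tau> * ut p)) (at p within ?H)"
      using has_derivative_gradient_form[OF hDu[OF p]] by (simp add: ux_def ut_def pd1)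
    have "(\<lambda>v. \<Sum>i\<in>Basis. D (i,0) p v *\<^sub>R i) = (\<lambda>(h,\<tau>). uxx p h + \<tau> *\<^sub>R uxt p)"
    proof (intro ext, clarify)
      fix h \<tau>
      have "D (i,0) p (h,\<tau>) = D (i,0) p (h,0) + \<tau> * D (i,0) p (0,1)" if "i \<in> Basis" for i
        using linear_pair_eq[OF lD[OF Basis_prod_fst[OF that] p], of h \<tau>]
          linear_pair_eq[OF lD[OF Basis_prod_fst[OF that] p], of h 0] by simp
      then show "(\<Sum>i\<in>Basis. D (i,0) p (h,\<tau>) *\<^sub>R i) = uxx p h + \<tau> *\<^sub>R uxt p"
        using p by (simp add: uxx_eq uxt_def scaleR_add_left sum.distrib scaleR_sum_right cong: sum.cong)
    qed
    moreover have "(ux has_derivative (\<lambda>v. \<Sum>i\<in>Basis. D (i,0) p v *\<^sub>R i)) (at p within ?H)"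
      unfolding ux_def
      by (intro has_derivative_sum bounded_linear.has_derivative[OF bounded_linear_scaleR_left]
          hD p Basis_prod_fst)
    ultimately show "(ux has_derivative (\<lambda>(h,\<tau>). uxx p h + \<tau> *\<^sub>R uxt p)) (at p within ?H)"
      by simp
    show "(ut has_derivative (\<lambda>(h,\<tau>). inner (utx p) h + \<tau> * utt p)) (at p within ?H)"
      using has_derivative_gradient_form[OF hD[OF Basis_prod_snd p]] by (simp add: ut_def utx_def utt_def)
    show "utt p = (\<Sum>b\<in>Basis. inner (uxx p b) b)"
      using wave[OF p] p by (simp add: utt_def pd2 uxx_eq)
  next
    fix p :: "'n \<times> real"
    show "linear (uxx p)"
      unfolding uxx_def
      by (intro linearI) (simp_all add: algebra_simps sum.distrib scaleR_sum_left scaleR_sum_right sum_distrib_left)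
  next
    fix v
    show "continuous_on ?H (\<lambda>p. uxx p v)"
      unfolding uxx_def pd2[symmetric] by (intro continuous_intros c2 Basis_prod_fst)
  next
    show "continuous_on ?H u" by (rule cu)
    show "continuous_on ?H ux" unfolding ux_def by (intro continuous_intros c1 Basis_prod_fst)
    show "continuous_on ?H ut" unfolding ut_def by (intro c1 Basis_prod_snd)
    show "continuous_on ?H uxt" "continuous_on ?H utx" "continuous_on ?H utt"
      unfolding uxt_def utx_def utt_def pd2[symmetric]
      by (auto intro!: continuous_intros c2 Basis_prod_fst Basis_prod_snd)
  qed
  moreover have "ux (y,0) = grad f y" for y
    using frechet_derivative_initial_trace[OF hDu initial(1)]
    by (simp add: ux_def grad_def pd1)
  ultimately show ?thesis using initial unfolding ut_def by blast
qed

lemma at_within_upper_half: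
  fixes p :: "'n::euclidean_space \<times> real"
  assumes "snd p > 0"
  shows "at p within upper_half = at p"
  by (rule at_within_open_subset[of _ "UNIV \<times> {0<..}"])
    (use assms in \<open>auto simp: open_Times mem_Times_iff\<close>)

context wave_data
begin

lemma
  assumes "snd p > 0"
  shows has_derivative_u_at: "(u has_derivative (\<lambda>(h,\<tau>). inner (ux p) h + \<tau> * ut p)) (at p)"
    and has_derivative_ux_at: "(ux has_derivative (\<lambda>(h,\<tau>). uxx p h + \<tau> *\<^sub>R uxt p)) (at p)"
    and has_derivative_ut_at: "(ut has_derivative (\<lambda>(h,\<tau>). inner (utx p) h + \<tau> * utt p)) (at p)"
  using has_derivative_u[of p] has_derivative_ux[of p] has_derivative_ut[of p] assms
  by (auto simp: at_within_upper_half[OF assms] mem_Times_iff)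

lemma continuous_on_compose_upper_half:
  assumes "continuous_on upper_half F" "continuous_on D P" "\<And>z. z \<in> D \<Longrightarrow> snd (P z) \<ge> 0"
  shows "continuous_on D (\<lambda>z. F (P z))"
  by (rule continuous_on_compose2[OF assms(1,2)]) (use assms(3) in \<open>auto simp: image_subset_iff mem_Times_iff\<close>)

lemma continuous_on_uxx_compose:
  assumes "continuous_on D P" "\<And>z. z \<in> D \<Longrightarrow> snd (P z) \<ge> 0" "continuous_on D V"
  shows "continuous_on D (\<lambda>z. uxx (P z) (V z))"
proof -
  have "uxx (P z) (V z) = (\<Sum>i\<in>Basis. inner (V z) i *\<^sub>R uxx (P z) i)" for z
  proof -
    have "uxx (P z) (V z) = uxx (P z) (\<Sum>i\<in>Basis. inner (V z) i *\<^sub>R i)"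
      by (simp add: euclidean_representation)
    then show ?thesis by (simp add: linear_sum[OF linear_uxx] linear_scale[OF linear_uxx])
  qed
  then show ?thesis
    by (simp only:) (intro continuous_intros continuous_on_compose_upper_half[OF continuous_uxx] assms)
qed

text \<open>Tested against each direction \<open>v\<close> by Clairaut's theorem in the plane
  \<open>(a, b) \<mapsto> (y + a v, \<tau> + b)\<close>.\<close>

lemma utx_eq_uxt:
  assumes "snd p > 0"
  shows "utx p = uxt p"
proof -
  obtain y \<tau> where p: "p = (y,\<tau>)" by (cases p)
  have "inner (uxt p) v = inner (utx p) v" for v
  proof -
    define q where "q = (\<lambda>a b. (y + a *\<^sub>R v, \<tau> + b))"
    define G :: "(real \<times> real) set" where "G = UNIV \<times> {-\<tau><..}"
    have q_pos: "(a,b) \<in> G \<Longrightarrow> snd (q a b) > 0" for a b by (auto simp: q_def G_def)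
    have qa: "((\<lambda>a. q a b) has_derivative (\<lambda>h. h *\<^sub>R (v, 0))) (at a)" for a b
      unfolding q_def by (auto intro!: derivative_eq_intros simp: fun_eq_iff)
    have qb: "((\<lambda>b. q a b) has_derivative (\<lambda>h. h *\<^sub>R (0, 1))) (at b)" for a b
      unfolding q_def by (auto intro!: derivative_eq_intros simp: fun_eq_iff)
    have cq: "continuous_on G (\<lambda>z. q (fst z) (snd z))" unfolding q_def by (intro continuous_intros)
    have q_nonneg: "z \<in> G \<Longrightarrow> snd (q (fst z) (snd z)) \<ge> 0" for z using q_pos[of "fst z" "snd z"] by simp
    have "inner (uxt (q 0 0)) v = inner (utx (q 0 0)) v"
    proof (rule mixed_partials_eq[where a = "\<lambda>a b. u (q a b)" and ax = "\<lambda>a b. inner (ux (q a b)) v"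
          and ay = "\<lambda>a b. ut (q a b)" and axy = "\<lambda>a b. inner (uxt (q a b)) v"
          and ayx = "\<lambda>a b. inner (utx (q a b)) v" and G = G])
      show "open G" "(0,0) \<in> G" using p assms by (auto simp: G_def open_Times)
      show "continuous_on G (\<lambda>(a,b). inner (uxt (q a b)) v)"
        unfolding case_prod_beta'
        by (intro continuous_intros continuous_on_compose_upper_half[OF continuous_uxt cq q_nonneg])
      show "continuous_on G (\<lambda>(a,b). inner (utx (q a b)) v)"
        unfolding case_prod_beta'
        by (intro continuous_intros continuous_on_compose_upper_half[OF continuous_utx cq q_nonneg])
      fix a b assume ab: "(a,b) \<in> G"
      show "((\<lambda>a. u (q a b)) has_real_derivative inner (ux (q a b)) v) (at a)"
        using has_real_derivative_along_path[OF qa has_derivative_u_at[OF q_pos[OF ab]]] by simp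
      show "((\<lambda>b. u (q a b)) has_real_derivative ut (q a b)) (at b)"
        using has_real_derivative_along_path[OF qb has_derivative_u_at[OF q_pos[OF ab]]] by simp
      show "((\<lambda>a. ut (q a b)) has_real_derivative inner (utx (q a b)) v) (at a)"
        using has_real_derivative_along_path[OF qa has_derivative_ut_at[OF q_pos[OF ab]]] by simp
      show "((\<lambda>b. inner (ux (q a b)) v) has_real_derivative inner (uxt (q a b)) v) (at b)"
        using bounded_linear.has_vector_derivative[OF bounded_linear_inner_left
            has_vector_derivative_along_path[OF qb has_derivative_ux_at[OF q_pos[OF ab]] linear_uxx]]
        by (simp add: has_real_derivative_iff_has_vector_derivative linear_0[OF linear_uxx])
    qed
    then show ?thesis by (simp add: q_def p)
  qed
  from this[of "utx p - uxt p"] have "inner (utx p - uxt p) (utx p - uxt p) = 0"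
    by (simp only: inner_diff_left diff_self)
  then show ?thesis by simp
qed

lemma continuous_on_initial_traces:
  "continuous_on UNIV (\<lambda>y. u (y,0))" "continuous_on UNIV (\<lambda>y. ut (y,0))" "continuous_on UNIV (\<lambda>y. ux (y,0))"
  by (auto intro!: continuous_on_compose_upper_half continuous_intros
      continuous_u continuous_ut continuous_ux)

lemma continuous_on_lower_integrand:
  assumes "\<And>y. u (y,0) = f y \<and> ut (y,0) = g y \<and> ux (y,0) = grad f y"
  shows "continuous_on UNIV (\<lambda>y. f y / (1 + norm y) - norm (grad f y) + g y)"
proof -
  have "continuous_on UNIV f" "continuous_on UNIV g" "continuous_on UNIV (grad f)"
    using continuous_on_initial_traces assms by (simp_all add: fun_eq_iff[symmetric])
  moreover have "1 + norm y \<noteq> 0" for y :: 'n by (smt (verit) norm_ge_zero)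
  ultimately show ?thesis by (intro continuous_intros) auto
qed

end

section \<open>Kirchhoff's formula\<close>

locale wave_data_3 = wave_data u ux uxt utx ut utt uxx
  for u :: "(real^3) \<times> real \<Rightarrow> real" and ux uxt utx ut utt uxx

begin

text \<open>Along the backward light cone the wave equation and \<open>utx = uxt\<close> cancel all time
  derivatives.\<close>

lemma has_real_derivative_cone_kernel:
  assumes "0 < s" "s < T"
  shows "((\<lambda>s. s * ut (x + s *\<^sub>R w, T - s) + u (x + s *\<^sub>R w, T - s) + s * inner (ux (x + s *\<^sub>R w, T - s)) w)
     has_real_derivative
     (2 * inner (ux (x + s *\<^sub>R w, T - s)) w + s * (inner (uxx (x + s *\<^sub>R w, T - s) w) w
        - (\<Sum>b\<in>Basis. inner (uxx (x + s *\<^sub>R w, T - s) b) b)))) (at s)"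
proof -
  define p where "p = (x + s *\<^sub>R w, T - s)"
  have p: "snd p > 0" using assms by (simp add: p_def)
  have path: "((\<lambda>s. (x + s *\<^sub>R w, T - s)) has_derivative (\<lambda>h. h *\<^sub>R (w, -1))) (at s)"
    by (auto intro!: derivative_eq_intros simp: fun_eq_iff)
  have "((\<lambda>s. ut (x + s *\<^sub>R w, T - s)) has_real_derivative inner (utx p) w - utt p) (at s)"
    using has_real_derivative_along_path[OF path has_derivative_ut_at[OF p[unfolded p_def]]] by (simp add: p_def)
  moreover have "((\<lambda>s. u (x + s *\<^sub>R w, T - s)) has_real_derivative inner (ux p) w - ut p) (at s)"
    using has_real_derivative_along_path[OF path has_derivative_u_at[OF p[unfolded p_def]]] by (simp add: p_def)
  moreover have "((\<lambda>s. inner (ux (x + s *\<^sub>R w, T - s)) w) has_real_derivative inner (uxx p w - uxt p) w) (at s)"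
    using bounded_linear.has_vector_derivative[OF bounded_linear_inner_left
        has_vector_derivative_along_path[OF path has_derivative_ux_at[OF p[unfolded p_def]] linear_uxx]]
    by (simp add: has_real_derivative_iff_has_vector_derivative p_def)
  ultimately have "((\<lambda>s. s * ut (x + s *\<^sub>R w, T - s) + u (x + s *\<^sub>R w, T - s) + s * inner (ux (x + s *\<^sub>R w, T - s)) w)
     has_real_derivative (s * (inner (utx p) w - utt p) + ut p) + (inner (ux p) w - ut p)
      + (s * inner (uxx p w - uxt p) w + inner (ux p) w)) (at s)"
    unfolding p_def by (auto intro!: derivative_eq_intros)
  moreover have "utt p = (\<Sum>b\<in>Basis. inner (uxx p b) b)"
    using p by (intro wave_equation) (auto simp: mem_Times_iff)
  ultimately show ?thesis
    using utx_eq_uxt[OF p] by (simp add: inner_diff_left algebra_simps p_def)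
qed

text \<open>On each sphere the derivative of the cone kernel is, up to the factor \<open>-s sin \<theta>\<close>, the
  spherical divergence \<open>\<partial>\<^sub>\<theta> A + \<partial>\<^sub>\<phi> B\<close> of the tangential field of \<open>ux\<close>, so it integrates to zero.\<close>

lemma sphere_int3_cone_kernel_derivative_eq_0:
  assumes "s > 0" "\<tau> > 0"
  shows "sphere_int3 (\<lambda>w. 2 * inner (ux (x + s *\<^sub>R w, \<tau>)) w + s * (inner (uxx (x + s *\<^sub>R w, \<tau>) w) w
       - (\<Sum>b\<in>Basis. inner (uxx (x + s *\<^sub>R w, \<tau>) b) b))) = 0"
proof -
  define Q where "Q = (\<lambda>t p. (x + s *\<^sub>R sph_er t p, \<tau>))"
  have Q: "snd (Q t p) > 0" for t p using assms by (simp add: Q_def)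
  have ux_theta: "((\<lambda>t. ux (Q t p) $ i) has_real_derivative s * uxx (Q t p) (sph_etheta t p) $ i) (at t)" for i t p
  proof -
    have "((\<lambda>t. (x + s *\<^sub>R sph_er t p, \<tau>)) has_derivative (\<lambda>h. h *\<^sub>R (s *\<^sub>R sph_etheta t p, 0))) (at t)"
      by (auto intro!: derivative_eq_intros has_derivative_sph_er_theta simp: fun_eq_iff)
    from bounded_linear.has_vector_derivative[OF bounded_linear_vec_nth
        has_vector_derivative_along_path[OF this has_derivative_ux_at[OF Q[unfolded Q_def]] linear_uxx]]
    show ?thesis by (simp add: has_real_derivative_iff_has_vector_derivative Q_def linear_scale[OF linear_uxx])
  qed
  have ux_phi: "((\<lambda>p. ux (Q t p) $ i) has_real_derivative s * sin t * uxx (Q t p) (sph_ephi p) $ i) (at p)" for i t p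
  proof -
    have "((\<lambda>p. (x + s *\<^sub>R sph_er t p, \<tau>)) has_derivative (\<lambda>h. h *\<^sub>R (s *\<^sub>R (sin t *\<^sub>R sph_ephi p), 0))) (at p)"
      by (auto intro!: derivative_eq_intros has_derivative_sph_er_phi simp: fun_eq_iff)
    from bounded_linear.has_vector_derivative[OF bounded_linear_vec_nth
        has_vector_derivative_along_path[OF this has_derivative_ux_at[OF Q[unfolded Q_def]] linear_uxx]]
    show ?thesis by (simp add: has_real_derivative_iff_has_vector_derivative Q_def linear_scale[OF linear_uxx])
  qed
  define A where "A = (\<lambda>t p. s * sin t * (cos t * cos p * ux (Q t p) $ 1 + cos t * sin p * ux (Q t p) $ 2
      - sin t * ux (Q t p) $ 3))"
  define B where "B = (\<lambda>t p. s * (- sin p * ux (Q t p) $ 1 + cos p * ux (Q t p) $ 2))"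
  define A' where "A' = (\<lambda>t p. s * cos t * inner (ux (Q t p)) (sph_etheta t p)
      + s * sin t * (s * inner (uxx (Q t p) (sph_etheta t p)) (sph_etheta t p) - inner (ux (Q t p)) (sph_er t p)))"
  define B' where "B' = (\<lambda>t p. s * (s * sin t * inner (uxx (Q t p) (sph_ephi p)) (sph_ephi p)
      - inner (ux (Q t p)) (vector [cos p, sin p, 0])))"
  define K where "K = (\<lambda>w. 2 * inner (ux (x + s *\<^sub>R w, \<tau>)) w + s * (inner (uxx (x + s *\<^sub>R w, \<tau>) w) w
       - (\<Sum>b\<in>Basis. inner (uxx (x + s *\<^sub>R w, \<tau>) b) b)))"
  have dA: "((\<lambda>t. A t p) has_real_derivative A' t p) (at t)" for t p
    unfolding A_def by (auto intro!: derivative_eq_intros ux_theta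
        simp: A'_def inner_vector3 sph_etheta_def sph_er_def algebra_simps)
  have dB: "((\<lambda>p. B t p) has_real_derivative B' t p) (at p)" for t p
    unfolding B_def by (auto intro!: derivative_eq_intros ux_phi simp: B'_def inner_vector3 sph_ephi_def algebra_simps)
  have cQ: "continuous_on UNIV (\<lambda>z. Q (fst z) (snd z))"
    unfolding Q_def by (intro continuous_intros)
  have Q_nonneg: "snd (Q (fst z) (snd z)) \<ge> 0" for z using Q[of "fst z" "snd z"] by simp
  have cA': "continuous_on UNIV (\<lambda>z. A' (fst z) (snd z))" and cB': "continuous_on UNIV (\<lambda>z. B' (fst z) (snd z))"
    unfolding A'_def B'_def vector3_eq_axis
    by (intro continuous_intros continuous_on_compose_upper_half[OF continuous_ux cQ]
        continuous_on_uxx_compose[OF cQ] Q_nonneg)+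
  have "A 0 p = A pi p" "B t 0 = B t (2*pi)" for t p by (simp_all add: A_def B_def Q_def sph_er_def)
  then have "integral {0..pi} (\<lambda>t. integral {0..2*pi} (\<lambda>p. A' t p + B' t p)) = 0"
    by (intro double_integral_of_partial_derivatives_eq_0[OF _ _ dA dB cA' cB']) auto
  moreover have "K (sph_er t p) * sin t = -(1/s) * (A' t p + B' t p)" for t p
    using spherical_divergence_identity[OF linear_uxx[of "Q t p"], of s t "ux (Q t p)" p] assms(1)
    by (simp add: A'_def B'_def K_def Q_def field_simps)
  ultimately have "sphere_int3 K = 0"
    by (simp add: sphere_int3_def sph_er_def[symmetric])
  then show ?thesis by (simp add: K_def)
qed

lemma kirchhoff_formula:
  assumes "T > 0"
  shows "4 * pi * u (x, T) = sphere_int3 (\<lambda>w. T * ut (x + T *\<^sub>R w, 0) + u (x + T *\<^sub>R w, 0)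
           + T * inner (ux (x + T *\<^sub>R w, 0)) w)"
proof -
  define P where "P = (\<lambda>s w. (x + s *\<^sub>R w, T - s))"
  define k where "k = (\<lambda>s w. s * ut (P s w) + u (P s w) + s * inner (ux (P s w)) w)"
  define k' where "k' = (\<lambda>s w. 2 * inner (ux (P s w)) w + s * (inner (uxx (P s w) w) w
        - (\<Sum>b\<in>Basis. inner (uxx (P s w) b) b)))"
  have ck: "continuous_on D (\<lambda>z. k (S z) (W z))"
    if "continuous_on D S" "continuous_on D W" "\<And>z. z \<in> D \<Longrightarrow> S z \<le> T" for D S W
  proof -
    have "continuous_on D (\<lambda>z. P (S z) (W z))" unfolding P_def using that by (intro continuous_intros)
    moreover have "\<And>z. z \<in> D \<Longrightarrow> snd (P (S z) (W z)) \<ge> 0" using that(3) by (simp add: P_def)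
    ultimately show ?thesis
      unfolding k_def using that(1,2)
      by (intro continuous_intros continuous_on_compose_upper_half[OF continuous_ut]
          continuous_on_compose_upper_half[OF continuous_u] continuous_on_compose_upper_half[OF continuous_ux])
  qed
  have "sphere_int3 (k T) = sphere_int3 (k 0)"
  proof (rule sphere_int3_eq_if_derivative_integral_0)
    show "continuous_on ({0..T} \<times> UNIV) (\<lambda>(s,w). k' s w)"
    proof -
      have "continuous_on ({0..T} \<times> UNIV) (\<lambda>z. P (fst z) (snd z))" unfolding P_def by (intro continuous_intros)
      moreover have "z \<in> {0..T} \<times> UNIV \<Longrightarrow> snd (P (fst z) (snd z)) \<ge> 0" for z by (auto simp: P_def)
      ultimately show ?thesis
        unfolding k'_def case_prod_beta'
        by (intro continuous_intros continuous_on_compose_upper_half[OF continuous_ux] continuous_on_uxx_compose)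
    qed
    show "sphere_int3 (k' s) = 0" if "s \<in> {0<..<T}" for s
      using sphere_int3_cone_kernel_derivative_eq_0[of s "T - s" x] that by (simp add: k'_def P_def)
    show "((\<lambda>s. k s w) has_real_derivative k' s w) (at s)" if "s \<in> {0<..<T}" for s w
      using has_real_derivative_cone_kernel[of s T x w] that by (simp add: k_def k'_def P_def)
  qed (use assms in \<open>auto intro!: ck continuous_intros\<close>)
  moreover have "k 0 = (\<lambda>w. u (x, T))" by (simp add: k_def P_def fun_eq_iff)
  ultimately show ?thesis by (simp add: sphere_int3_const k_def P_def)
qed

lemma kirchhoff_lower_bound:
  assumes "T > 0" "continuous_on UNIV \<psi>"
    and "\<And>w. norm w = 1 \<Longrightarrow> T * \<psi> w \<le> T * ut (x + T *\<^sub>R w, 0) + u (x + T *\<^sub>R w, 0) + T * inner (ux (x + T *\<^sub>R w, 0)) w"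
  shows "T * sphere_int3 \<psi> \<le> 4 * pi * u (x, T)"
proof -
  have kernel: "continuous_on UNIV (\<lambda>w. T * ut (x + T *\<^sub>R w, 0) + u (x + T *\<^sub>R w, 0) + T * inner (ux (x + T *\<^sub>R w, 0)) w)"
    by (intro continuous_intros continuous_on_compose2[OF continuous_on_initial_traces(1)]
        continuous_on_compose2[OF continuous_on_initial_traces(2)]
        continuous_on_compose2[OF continuous_on_initial_traces(3)]) auto
  have "sphere_int3 (\<lambda>w. T * \<psi> w) \<le> sphere_int3 (\<lambda>w. T * ut (x + T *\<^sub>R w, 0) + u (x + T *\<^sub>R w, 0)
      + T * inner (ux (x + T *\<^sub>R w, 0)) w)"
    by (rule sphere_int3_mono[OF _ kernel]) (use assms(2,3) in \<open>auto intro!: continuous_intros\<close>)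
  then show ?thesis by (simp add: sphere_int3_cmult kirchhoff_formula[OF assms(1)])
qed

end

section \<open>Descent to two dimensions\<close>

definition proj12 :: "real^3 \<Rightarrow> real^2" where
  "proj12 y = vector [y$1, y$2]"

definition embed12 :: "real^2 \<Rightarrow> real^3" where
  "embed12 v = vector [v$1, v$2, 0]"

definition descend :: "(real^3) \<times> real \<Rightarrow> (real^2) \<times> real" where
  "descend p = (proj12 (fst p), snd p)"

lemma linear_proj12: "linear proj12"
  by (rule linearI) (simp_all add: proj12_def vec_eq_iff forall_2)

lemma linear_embed12: "linear embed12"
  by (rule linearI) (simp_all add: embed12_def vec_eq_iff forall_3)

lemma inner_embed12: "inner (embed12 v) h = inner v (proj12 h)"
  by (simp add: embed12_def proj12_def inner_vec_def sum_2 sum_3)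

lemma proj12_embed12 [simp]: "proj12 (embed12 v) = v"
  by (simp add: embed12_def proj12_def vec_eq_iff forall_2)

lemma norm_proj12_le: "norm (proj12 w) \<le> norm w"
proof -
  have "norm (proj12 w) ^ 2 \<le> norm w ^ 2"
    by (simp add: power2_norm_eq_inner proj12_def inner_vec_def sum_2 sum_3)
  then show ?thesis by (simp add: power2_le_iff_abs_le)
qed

lemma sum_Basis_vec2: "(\<Sum>b\<in>(Basis::(real^2) set). f b) = f (axis 1 1) + f (axis 2 1)"
proof -
  have B: "(Basis::(real^2) set) = {axis 1 1, axis 2 1}"
    by (auto simp: Basis_vec_def UNIV_2)
  have "axis 1 1 \<noteq> (axis 2 1 :: real^2)" by (auto simp: axis_eq_axis)
  then show ?thesis unfolding B by simp
qed

lemma trace_proj12_embed12: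
  assumes "linear (H :: real^2 \<Rightarrow> real^2)"
  shows "(\<Sum>b\<in>Basis. inner (embed12 (H (proj12 b))) b) = (\<Sum>b\<in>Basis. inner (H b) b)"
proof -
  have "proj12 (axis 1 1) = axis 1 1" "proj12 (axis 2 1) = axis 2 1" "proj12 (axis 3 1) = 0"
    by (simp_all add: proj12_def vec_eq_iff forall_2 axis_def)
  then show ?thesis
    unfolding sum_Basis_vec2 sum_Basis_vec3 inner_embed12 by (simp add: linear_0[OF assms])
qed

lemma descend_upper_half: "p \<in> upper_half \<Longrightarrow> descend p \<in> upper_half"
  by (cases p) (auto simp: descend_def)

lemma has_derivative_descend: "(descend has_derivative descend) F"
proof -
  have "bounded_linear proj12" using linear_proj12 by (simp add: linear_conv_bounded_linear)
  then have "bounded_linear descend" unfolding descend_def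
    by (intro bounded_linear_Pair bounded_linear_compose[OF \<open>bounded_linear proj12\<close>]
        bounded_linear_fst bounded_linear_snd)
  then show ?thesis by (rule bounded_linear_imp_has_derivative)
qed

lemma continuous_on_descend: "continuous_on S descend"
  using has_derivative_descend by (rule has_derivative_continuous_on)

lemma has_derivative_compose_descend:
  fixes F :: "(real^2) \<times> real \<Rightarrow> 'b::real_normed_vector"
  assumes "p \<in> upper_half"
    and "(F has_derivative (\<lambda>(h,\<tau>). L h + \<tau> *\<^sub>R c)) (at (descend p) within upper_half)"
  shows "((\<lambda>p. F (descend p)) has_derivative (\<lambda>(h,\<tau>). L (proj12 h) + \<tau> *\<^sub>R c)) (at p within upper_half)"
proof -
  have "((\<lambda>p. F (descend p)) has_derivative (\<lambda>x. (\<lambda>(h,\<tau>). L h + \<tau> *\<^sub>R c) (descend x)))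
      (at p within upper_half)"
  proof (rule has_derivative_in_compose[OF has_derivative_descend])
    show "(F has_derivative (\<lambda>(h,\<tau>). L h + \<tau> *\<^sub>R c)) (at (descend p) within descend ` upper_half)"
      by (rule has_derivative_subset[OF assms(2)]) (rule image_subsetI, rule descend_upper_half)
  qed
  moreover have "(\<lambda>x. (\<lambda>(h,\<tau>). L h + \<tau> *\<^sub>R c) (descend x)) = (\<lambda>(h,\<tau>). L (proj12 h) + \<tau> *\<^sub>R c)"
    by (auto simp: descend_def fun_eq_iff)
  ultimately show ?thesis by simp
qed

lemma wave_data_descend:
  fixes u :: "(real^2) \<times> real \<Rightarrow> real"
  assumes "wave_data u ux uxt utx ut utt uxx"
  shows "wave_data_3 (\<lambda>p. u (descend p)) (\<lambda>p. embed12 (ux (descend p))) (\<lambda>p. embed12 (uxt (descend p)))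
     (\<lambda>p. embed12 (utx (descend p))) (\<lambda>p. ut (descend p)) (\<lambda>p. utt (descend p))
     (\<lambda>p h. embed12 (uxx (descend p) (proj12 h)))"
proof -
  interpret wave_data u ux uxt utx ut utt uxx by (rule assms)
  have bl_embed12: "bounded_linear embed12" using linear_embed12 by (simp add: linear_conv_bounded_linear)
  have cont: "continuous_on upper_half (\<lambda>p. F (descend p))"
    if "continuous_on upper_half F" for F :: "_ \<Rightarrow> 'b::topological_space"
    by (rule continuous_on_compose2[OF that continuous_on_descend]) (auto simp: descend_def)
  have cont_embed: "continuous_on upper_half (\<lambda>p. embed12 (F (descend p)))" if "continuous_on upper_half F" for F
    by (intro continuous_on_compose2[OF linear_continuous_on[OF bl_embed12] cont[OF that]]) auto
  show ?thesis
    unfolding wave_data_3_def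
  proof (rule wave_data.intro)
    fix p :: "(real^3) \<times> real" assume p: "p \<in> upper_half"
    show "((\<lambda>p. u (descend p)) has_derivative (\<lambda>(h,\<tau>). inner (embed12 (ux (descend p))) h + \<tau> * ut (descend p)))
        (at p within upper_half)"
      using has_derivative_compose_descend[OF p, of u "inner (ux (descend p))" "ut (descend p)"]
        has_derivative_u[OF descend_upper_half[OF p]] by (simp add: inner_embed12)
    show "((\<lambda>p. ut (descend p)) has_derivative (\<lambda>(h,\<tau>). inner (embed12 (utx (descend p))) h + \<tau> * utt (descend p)))
        (at p within upper_half)"
      using has_derivative_compose_descend[OF p, of ut "inner (utx (descend p))" "utt (descend p)"]
        has_derivative_ut[OF descend_upper_half[OF p]] by (simp add: inner_embed12)
    have "((\<lambda>p. embed12 (ux (descend p))) has_derivative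
        (\<lambda>v. embed12 ((\<lambda>(h,\<tau>). uxx (descend p) (proj12 h) + \<tau> *\<^sub>R uxt (descend p)) v))) (at p within upper_half)"
      by (rule bounded_linear.has_derivative[OF bl_embed12
            has_derivative_compose_descend[OF p has_derivative_ux[OF descend_upper_half[OF p]]]])
    then show "((\<lambda>p. embed12 (ux (descend p))) has_derivative
        (\<lambda>(h,\<tau>). embed12 (uxx (descend p) (proj12 h)) + \<tau> *\<^sub>R embed12 (uxt (descend p)))) (at p within upper_half)"
      by (simp add: case_prod_beta' linear_add[OF linear_embed12] linear_scale[OF linear_embed12])
    show "utt (descend p) = (\<Sum>b\<in>Basis. inner (embed12 (uxx (descend p) (proj12 b))) b)"
      by (simp add: trace_proj12_embed12[OF linear_uxx] wave_equation[OF descend_upper_half[OF p]])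
  next
    fix p :: "(real^3) \<times> real"
    show "linear (\<lambda>h. embed12 (uxx (descend p) (proj12 h)))"
      using linear_compose[OF linear_proj12 linear_compose[OF linear_uxx linear_embed12]] by (simp add: o_def)
  next
    fix v
    show "continuous_on upper_half (\<lambda>p. embed12 (uxx (descend p) (proj12 v)))"
      by (rule cont_embed[OF continuous_uxx])
  qed (fact cont[OF continuous_u] cont_embed[OF continuous_ux] cont[OF continuous_ut]
      cont_embed[OF continuous_uxt] cont_embed[OF continuous_utx] cont[OF continuous_utt])+
qed

lemma sphere_int3_planar_eq_descent_integral:
  fixes \<psi> :: "real^2 \<Rightarrow> real"
  assumes "continuous_on UNIV \<psi>" "t > 0"
  shows "sphere_int3 (\<lambda>w. \<psi> (x + t *\<^sub>R proj12 w))
       = 2 / t * integral {0..t} (\<lambda>\<rho>. \<rho> / sqrt (t\<^sup>2 - \<rho>\<^sup>2) * sphere_int2 (\<lambda>\<omega>. \<psi> (x + \<rho> *\<^sub>R \<omega>)))"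
proof -
  define S where "S = (\<lambda>\<rho>. sphere_int2 (\<lambda>\<omega>. \<psi> (x + \<rho> *\<^sub>R \<omega>)))"
  have "continuous_on (UNIV \<times> cbox 0 (2*pi)) (\<lambda>(\<rho>, \<phi>). \<psi> (x + \<rho> *\<^sub>R vector [cos \<phi>, sin \<phi>]))"
  proof -
    have "(vector [a, b] :: real^2) = a *\<^sub>R axis 1 1 + b *\<^sub>R axis 2 1" for a b
      by (simp add: vec_eq_iff forall_2 axis_def)
    then show ?thesis
      unfolding case_prod_beta' by (auto intro!: continuous_intros continuous_on_compose2[OF assms(1)])
  qed
  then have "continuous_on UNIV S"
    unfolding S_def sphere_int2_def using integral_continuous_on_param by (fastforce simp: cbox_interval)
  then have "integral {0..pi} (\<lambda>\<theta>. sin \<theta> * S (t * sin \<theta>))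
      = 2 / t * integral {0..t} (\<lambda>\<rho>. \<rho> / sqrt (t\<^sup>2 - \<rho>\<^sup>2) * S \<rho>)"
    using assms(2) by (intro integral_sin_eq_descent_integral) (auto intro: continuous_on_subset)
  moreover have "x + t *\<^sub>R proj12 (vector [sin \<theta> * cos \<phi>, sin \<theta> * sin \<phi>, cos \<theta>])
      = x + (t * sin \<theta>) *\<^sub>R vector [cos \<phi>, sin \<phi>]" for \<theta> \<phi>
    by (simp add: proj12_def vec_eq_iff forall_2)
  ultimately show ?thesis
    by (simp add: sphere_int3_def S_def sphere_int2_def mult.commute)
qed

section \<open>The lower bound\<close>

lemma kirchhoff_integrand_lower_bound:
  fixes x v a :: "'a::real_inner"
  assumes "t > 0" "norm x - t \<ge> max R (t - 1)" "\<And>y. norm y \<ge> R \<Longrightarrow> f y > 0" "norm v \<le> 1"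
  shows "t * (f (x + t *\<^sub>R v) / (1 + norm (x + t *\<^sub>R v)) - norm a + c)
      \<le> t * c + f (x + t *\<^sub>R v) + t * inner a v"
proof -
  define y where "y = x + t *\<^sub>R v"
  have "norm x \<le> norm y + norm (t *\<^sub>R v)"
    using norm_triangle_ineq[of y "- (t *\<^sub>R v)"] by (simp add: y_def)
  moreover have "norm (t *\<^sub>R v) \<le> t" using assms(1,4) by (simp add: mult_left_le)
  ultimately have "norm y \<ge> norm x - t" by simp
  then have f: "f y > 0" and t: "t \<le> 1 + norm y" using assms(2,3) by auto
  have "t * (f y / (1 + norm y)) = t / (1 + norm y) * f y" by simp
  also have "\<dots> \<le> f y" using f t assms(1) by (intro mult_left_le_one_le) auto
  finally have "t * (f y / (1 + norm y)) \<le> f y" .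
  moreover have "- norm a \<le> inner a v"
    using Cauchy_Schwarz_ineq2[of a v] mult_left_le[OF assms(4) norm_ge_zero[of a]] by linarith
  then have "t * (- norm a) \<le> t * inner a v" using assms(1) by (intro mult_left_mono) auto
  ultimately show ?thesis by (simp add: y_def algebra_simps)
qed

lemma wave_lower_bound_3:
  fixes f g :: "real^3 \<Rightarrow> real" and u :: "(real^3) \<times> real \<Rightarrow> real"
  assumes "wave_sol u f g" "\<And>x. norm x \<ge> R \<Longrightarrow> f x > 0" "t > 0" "norm x - t \<ge> max R (t - 1)"
  shows "u (x, t) \<ge> t / (4 * pi) * sphere_int3 (\<lambda>\<omega>.
           f (x + t *\<^sub>R \<omega>) / (1 + norm (x + t *\<^sub>R \<omega>)) - norm (grad f (x + t *\<^sub>R \<omega>)) + g (x + t *\<^sub>R \<omega>))"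
proof -
  obtain ux uxt utx ut utt uxx where "wave_data u ux uxt utx ut utt uxx"
    and initial: "\<And>y. u (y,0) = f y \<and> ut (y,0) = g y \<and> ux (y,0) = grad f y"
    using wave_sol_imp_wave_data[OF assms(1)] by blast
  then interpret wave_data_3 u ux uxt utx ut utt uxx by (simp add: wave_data_3_def)
  define \<psi> where "\<psi> = (\<lambda>y. f y / (1 + norm y) - norm (grad f y) + g y)"
  have c\<psi>: "continuous_on UNIV \<psi>"
    unfolding \<psi>_def using continuous_on_lower_integrand[OF initial] .
  have "t * sphere_int3 (\<lambda>w. \<psi> (x + t *\<^sub>R w)) \<le> 4 * pi * u (x, t)"
  proof (rule kirchhoff_lower_bound[OF assms(3)])
    show "continuous_on UNIV (\<lambda>w. \<psi> (x + t *\<^sub>R w))"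
      by (intro continuous_on_compose2[OF c\<psi>] continuous_intros) auto
    fix w :: "real^3" assume "norm w = 1"
    then show "t * \<psi> (x + t *\<^sub>R w)
        \<le> t * ut (x + t *\<^sub>R w, 0) + u (x + t *\<^sub>R w, 0) + t * inner (ux (x + t *\<^sub>R w, 0)) w"
      using kirchhoff_integrand_lower_bound[OF assms(3,4,2), where v = w and a = "grad f (x + t *\<^sub>R w)"
          and c = "g (x + t *\<^sub>R w)"] initial
      by (simp add: \<psi>_def)
  qed
  then show ?thesis by (simp add: \<psi>_def field_simps)
qed

lemma wave_lower_bound_2:
  fixes f g :: "real^2 \<Rightarrow> real" and u :: "(real^2) \<times> real \<Rightarrow> real"
  assumes "wave_sol u f g" "\<And>x. norm x \<ge> R \<Longrightarrow> f x > 0" "t > 0" "norm x - t \<ge> max R (t - 1)"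
  shows "u (x, t) \<ge> 1 / (2 * pi) * integral {0..t} (\<lambda>\<rho>. \<rho> / sqrt (t\<^sup>2 - \<rho>\<^sup>2) *
           sphere_int2 (\<lambda>\<omega>. f (x + \<rho> *\<^sub>R \<omega>) / (1 + norm (x + \<rho> *\<^sub>R \<omega>)) - norm (grad f (x + \<rho> *\<^sub>R \<omega>))
             + g (x + \<rho> *\<^sub>R \<omega>)))"
proof -
  obtain ux uxt utx ut utt uxx where W: "wave_data u ux uxt utx ut utt uxx"
    and initial: "\<And>y. u (y,0) = f y \<and> ut (y,0) = g y \<and> ux (y,0) = grad f y"
    using wave_sol_imp_wave_data[OF assms(1)] by blast
  interpret wave_data u ux uxt utx ut utt uxx by (rule W)
  interpret lifted: wave_data_3 "\<lambda>p. u (descend p)" "\<lambda>p. embed12 (ux (descend p))"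
    "\<lambda>p. embed12 (uxt (descend p))" "\<lambda>p. embed12 (utx (descend p))" "\<lambda>p. ut (descend p)"
    "\<lambda>p. utt (descend p)" "\<lambda>p h. embed12 (uxx (descend p) (proj12 h))"
    by (rule wave_data_descend[OF W])
  define \<psi> where "\<psi> = (\<lambda>y. f y / (1 + norm y) - norm (grad f y) + g y)"
  have c\<psi>: "continuous_on UNIV \<psi>"
    unfolding \<psi>_def using continuous_on_lower_integrand[OF initial] .
  have descend: "descend (embed12 x + t *\<^sub>R w, s) = (x + t *\<^sub>R proj12 w, s)" for w s
    by (simp add: descend_def linear_add[OF linear_proj12] linear_scale[OF linear_proj12])
  have "t * sphere_int3 (\<lambda>w. \<psi> (x + t *\<^sub>R proj12 w)) \<le> 4 * pi * u (descend (embed12 x, t))"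
  proof (rule lifted.kirchhoff_lower_bound[OF assms(3)])
    have "continuous_on UNIV proj12" using linear_proj12 by (simp add: linear_continuous_on linear_conv_bounded_linear)
    then show "continuous_on UNIV (\<lambda>w. \<psi> (x + t *\<^sub>R proj12 w))"
      by (intro continuous_on_compose2[OF c\<psi>] continuous_intros) auto
    fix w :: "real^3" assume "norm w = 1"
    then have "norm (proj12 w) \<le> 1" using norm_proj12_le[of w] by simp
    then show "t * \<psi> (x + t *\<^sub>R proj12 w) \<le> t * ut (descend (embed12 x + t *\<^sub>R w, 0))
        + u (descend (embed12 x + t *\<^sub>R w, 0)) + t * inner (embed12 (ux (descend (embed12 x + t *\<^sub>R w, 0)))) w"
      using kirchhoff_integrand_lower_bound[OF assms(3,4,2), where v = "proj12 w"
          and a = "grad f (x + t *\<^sub>R proj12 w)" and c = "g (x + t *\<^sub>R proj12 w)"] initial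
      by (simp add: descend inner_embed12 \<psi>_def)
  qed
  then have "t * (2 / t * integral {0..t} (\<lambda>\<rho>. \<rho> / sqrt (t\<^sup>2 - \<rho>\<^sup>2) * sphere_int2 (\<lambda>\<omega>. \<psi> (x + \<rho> *\<^sub>R \<omega>))))
      \<le> 4 * pi * u (x, t)"
    by (simp add: sphere_int3_planar_eq_descent_integral[OF c\<psi> assms(3)] descend_def)
  then show ?thesis using assms(3) by (simp add: \<psi>_def field_simps)
qed

theorem proposition3p4:
  shows
  "(\<forall>(f :: real^3 \<Rightarrow> real) (g :: real^3 \<Rightarrow> real) (u :: (real^3) \<times> real \<Rightarrow> real) (R::real) (C0::real) (\<kappa>::real).
      cont_diff 3 f UNIV \<and> cont_diff 2 g UNIV \<and> R > 0 \<and> C0 > 0 \<and> \<kappa> > 0 \<and>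
      (\<forall>x. norm x \<ge> R \<longrightarrow> f x > 0 \<and>
          f x / (1 + norm x) - norm (grad f x) + g x \<ge> C0 / (1 + norm x) powr (1 + \<kappa>)) \<and>
      wave_sol u f g
      \<longrightarrow> (\<forall>x t. t > 0 \<and> norm x - t \<ge> max R (t - 1) \<longrightarrow>
            u (x, t) \<ge> t / (4 * pi) * sphere_int3 (\<lambda>\<omega>.
               f (x + t *\<^sub>R \<omega>) / (1 + norm (x + t *\<^sub>R \<omega>)) - norm (grad f (x + t *\<^sub>R \<omega>))
               + g (x + t *\<^sub>R \<omega>))))
   \<and>
   (\<forall>(f :: real^2 \<Rightarrow> real) (g :: real^2 \<Rightarrow> real) (u :: (real^2) \<times> real \<Rightarrow> real) (R::real) (C0::real) (\<kappa>::real).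
      cont_diff 3 f UNIV \<and> cont_diff 2 g UNIV \<and> R > 0 \<and> C0 > 0 \<and> \<kappa> > 0 \<and>
      (\<forall>x. norm x \<ge> R \<longrightarrow> f x > 0 \<and>
          f x / (1 + norm x) - norm (grad f x) + g x \<ge> C0 / (1 + norm x) powr (1 + \<kappa>)) \<and>
      wave_sol u f g
      \<longrightarrow> (\<forall>x t. t > 0 \<and> norm x - t \<ge> max R (t - 1) \<longrightarrow>
            u (x, t) \<ge> 1 / (2 * pi) * integral {0..t} (\<lambda>\<rho>. \<rho> / sqrt (t\<^sup>2 - \<rho>\<^sup>2) *
               sphere_int2 (\<lambda>\<omega>.
                 f (x + \<rho> *\<^sub>R \<omega>) / (1 + norm (x + \<rho> *\<^sub>R \<omega>)) - norm (grad f (x + \<rho> *\<^sub>R \<omega>))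
                 + g (x + \<rho> *\<^sub>R \<omega>)))))"
proof (intro conjI allI impI, goal_cases)
  case (1 f g u R C0 \<kappa> x t)
  then show ?case by (intro wave_lower_bound_3[where R = R]) auto
next
  case (2 f g u R C0 \<kappa> x t)
  then show ?case by (intro wave_lower_bound_2[where R = R]) auto
qed

end
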